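(* Let $n\ge1$, $L,G>0$ and $\eta>0$ with $\eta L\le 1$. Let $a_1,\dots,a_n\in[0,L]$ and $b_1,\dots,b_n\in[-G,G]$ with $\sum_{i=1}^nb_i=0$. For a permutation $\sigma$ of $\{1,\dots,n\}$ define \[ X_\sigma=\sum_{j=1}^n\left(\prod_{i=j+1}^n(1-\eta a_{\sigma(i)})\right)b_{\sigma(j)} \] (an empty product equals $1$). If $\sigma$ is a uniformly random permutation, then \[ \mathbb{E}_\sigma\big[X_\sigma^2\big]\;\le\;5\eta^2n^3L^2G^2\log(2n). \] *)

theory Defs
  imports "HOL-Analysis.Analysis" "HOL-Combinatorics.Permutations"
begin

definition X_perm :: "nat \<Rightarrow> real \<Rightarrow> (nat \<Rightarrow> real) \<Rightarrow> (nat \<Rightarrow> real) \<Rightarrow> (nat \<Rightarrow> nat) \<Rightarrow> real" where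
  "X_perm n \<eta> a b \<sigma> =
     (\<Sum>j = 1..n. (\<Prod>i = j+1..n. (1 - \<eta> * a (\<sigma> i))) * b (\<sigma> j))"

definition perm_expect :: "nat \<Rightarrow> ((nat \<Rightarrow> nat) \<Rightarrow> real) \<Rightarrow> real" where
  "perm_expect n F =
     (\<Sum>\<sigma> \<in> {\<sigma>. \<sigma> permutes {1..n}}. F \<sigma>) / real (card {\<sigma>. \<sigma> permutes {1..n}})"

end

theory Submission
  imports Defs
begin

text \<open>
  Summation by parts expresses X(\<sigma>) through the suffix sums S i = b(\<sigma> i) + ... + b(\<sigma> n).
  Since S 1 = 0, only the terms c i * (\<Prod>l>i. 1 - c l) * S i with c i = \<eta> a(\<sigma> i) in [0, \<eta> L]
  remain, so X(\<sigma>)^2 \<le> (\<eta> L)^2 n \<Sum>i. (S i)^2 by Cauchy-Schwarz. Under a uniformly random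
  permutation the values at two distinct positions are negatively correlated because b sums to
  zero, hence E (S i)^2 \<le> (n - i + 1) G^2. Altogether E X^2 \<le> \<eta>^2 L^2 n^3 G^2, and 5 ln (2n) \<ge> 1.
\<close>

lemma sum_tail_prod_Abel:
  fixes c \<beta> :: "nat \<Rightarrow> 'a::comm_ring_1"
  assumes "k \<le> m + 1"
  shows "(\<Sum>j=k..m. (\<Prod>i=j+1..m. 1 - c i) * \<beta> j)
    = (\<Prod>i=k..m. 1 - c i) * (\<Sum>j=k..m. \<beta> j)
      + (\<Sum>i=k..m. c i * (\<Prod>l=i+1..m. 1 - c l) * (\<Sum>j=i..m. \<beta> j))"
  using assms
proof (induction k rule: inc_induct)
  case base
  then show ?case by simp
next
  case (step k)
  then have "k \<le> m" by simp
  then show ?case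
    using step.IH
    by (simp add: sum.atLeast_Suc_atMost prod.atLeast_Suc_atMost algebra_simps)
qed

lemma abs_sum_tail_prod_le:
  fixes c \<beta> :: "nat \<Rightarrow> real"
  assumes c: "\<forall>i\<in>{1..m}. 0 \<le> c i \<and> c i \<le> \<delta>" and "\<delta> \<le> 1"
    and sum_zero: "(\<Sum>j=1..m. \<beta> j) = 0"
  shows "\<bar>\<Sum>j=1..m. (\<Prod>i=j+1..m. 1 - c i) * \<beta> j\<bar> \<le> \<delta> * (\<Sum>i=1..m. \<bar>\<Sum>j=i..m. \<beta> j\<bar>)"
proof -
  have weight: "\<bar>c i * (\<Prod>l=i+1..m. 1 - c l)\<bar> \<le> \<delta>" if i: "i \<in> {1..m}" for i
  proof -
    have "\<forall>l\<in>{i+1..m}. 0 \<le> 1 - c l \<and> 1 - c l \<le> 1"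
    proof
      fix l assume "l \<in> {i+1..m}"
      then have "0 \<le> c l" "c l \<le> \<delta>"
        using c by auto
      then show "0 \<le> 1 - c l \<and> 1 - c l \<le> 1"
        using \<open>\<delta> \<le> 1\<close> by linarith
    qed
    then have "0 \<le> (\<Prod>l=i+1..m. 1 - c l)" "(\<Prod>l=i+1..m. 1 - c l) \<le> 1"
      by (auto intro!: prod_nonneg prod_le_1)
    moreover have "0 \<le> c i" "c i \<le> \<delta>"
      using c i by auto
    ultimately show ?thesis
      by (simp add: abs_mult) (meson mult_left_le order_trans)
  qed
  have "(\<Sum>j=1..m. (\<Prod>i=j+1..m. 1 - c i) * \<beta> j)
      = (\<Sum>i=1..m. c i * (\<Prod>l=i+1..m. 1 - c l) * (\<Sum>j=i..m. \<beta> j))"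
    using sum_tail_prod_Abel[of 1 m c \<beta>] sum_zero by simp
  also have "\<bar>\<dots>\<bar> \<le> (\<Sum>i=1..m. \<bar>c i * (\<Prod>l=i+1..m. 1 - c l)\<bar> * \<bar>\<Sum>j=i..m. \<beta> j\<bar>)"
    by (rule order_trans[OF sum_abs]) (simp add: abs_mult)
  also have "\<dots> \<le> (\<Sum>i=1..m. \<delta> * \<bar>\<Sum>j=i..m. \<beta> j\<bar>)"
    by (intro sum_mono mult_right_mono weight) auto
  finally show ?thesis
    by (simp add: sum_distrib_left)
qed

lemma sum_tail_prod_squared_le:
  fixes c \<beta> :: "nat \<Rightarrow> real"
  assumes "\<forall>i\<in>{1..m}. 0 \<le> c i \<and> c i \<le> \<delta>" and "\<delta> \<le> 1"
    and "(\<Sum>j=1..m. \<beta> j) = 0"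
  shows "(\<Sum>j=1..m. (\<Prod>i=j+1..m. 1 - c i) * \<beta> j)\<^sup>2 \<le> \<delta>\<^sup>2 * m * (\<Sum>i=1..m. (\<Sum>j=i..m. \<beta> j)\<^sup>2)"
proof -
  let ?S = "\<lambda>i. \<bar>\<Sum>j=i..m. \<beta> j\<bar>"
  have "(\<Sum>j=1..m. (\<Prod>i=j+1..m. 1 - c i) * \<beta> j)\<^sup>2
      = \<bar>\<Sum>j=1..m. (\<Prod>i=j+1..m. 1 - c i) * \<beta> j\<bar>\<^sup>2"
    by simp
  also have "\<dots> \<le> (\<delta> * (\<Sum>i=1..m. ?S i))\<^sup>2"
    by (rule power_mono[OF abs_sum_tail_prod_le[OF assms] abs_ge_zero])
  also have "\<dots> = \<delta>\<^sup>2 * (\<Sum>i=1..m. ?S i)\<^sup>2"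
    by (simp add: power_mult_distrib)
  also have "\<dots> \<le> \<delta>\<^sup>2 * ((\<Sum>i=1..m. (?S i)\<^sup>2) * m)"
    using sum_squared_le_sum_of_squares[of ?S "{1..m}"] by (intro mult_left_mono) simp_all
  finally show ?thesis
    by (simp add: mult_ac)
qed

lemma X_perm_squared_le:
  assumes "\<sigma> permutes {1..n}" and "\<eta> \<ge> 0" and "\<eta> * L \<le> 1"
    and "\<forall>i\<in>{1..n}. 0 \<le> a i \<and> a i \<le> L" and "(\<Sum>i=1..n. b i) = 0"
  shows "(X_perm n \<eta> a b \<sigma>)\<^sup>2 \<le> (\<eta> * L)\<^sup>2 * n * (\<Sum>i=1..n. (\<Sum>j=i..n. b (\<sigma> j))\<^sup>2)"
proof -
  have image: "\<sigma> i \<in> {1..n}" if "i \<in> {1..n}" for i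
    using assms(1) that permutes_in_image by fastforce
  have "(\<Sum>j=1..n. b (\<sigma> j)) = 0"
    using sum.permute[OF assms(1), of b] assms(5) by (simp add: comp_def)
  moreover have "\<forall>i\<in>{1..n}. 0 \<le> \<eta> * a (\<sigma> i) \<and> \<eta> * a (\<sigma> i) \<le> \<eta> * L"
    using assms(2,4) image by (auto intro: mult_left_mono)
  ultimately show ?thesis
    unfolding X_perm_def using assms(3) by (intro sum_tail_prod_squared_le) auto
qed

text \<open>Composing with the transposition of \<open>k\<close> and \<open>k'\<close> shows that the sum does not
  depend on the second position; averaging over it leaves \<open>-b(\<sigma> j)\<^sup>2\<close>.\<close>

lemma sum_permutations_product_nonpos:
  fixes b :: "'a \<Rightarrow> real"
  assumes "finite A" "j \<in> A" "k \<in> A" "j \<noteq> k" and sum_zero: "(\<Sum>i\<in>A. b i) = 0"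
  shows "(\<Sum>\<sigma>\<in>{\<sigma>. \<sigma> permutes A}. b (\<sigma> j) * b (\<sigma> k)) \<le> 0"
proof -
  let ?P = "{\<sigma>. \<sigma> permutes A}"
  let ?T = "\<Sum>\<sigma>\<in>?P. b (\<sigma> j) * b (\<sigma> k)"
  let ?K = "A - {j}"
  have T_eq: "(\<Sum>\<sigma>\<in>?P. b (\<sigma> j) * b (\<sigma> k')) = ?T" if k': "k' \<in> ?K" for k'
  proof -
    have "Transposition.transpose k k' permutes A"
      using k' assms by (intro permutes_swap_id) auto
    then have "?T = (\<Sum>\<sigma>\<in>?P. b ((\<sigma> \<circ> Transposition.transpose k k') j) * b ((\<sigma> \<circ> Transposition.transpose k k') k))"
      by (rule sum_permutations_compose_right)
    also have "\<dots> = (\<Sum>\<sigma>\<in>?P. b (\<sigma> j) * b (\<sigma> k'))"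
      using k' assms by (auto simp: Transposition.transpose_def)
    finally show ?thesis by simp
  qed
  have rest: "(\<Sum>k'\<in>?K. b (\<sigma> k')) = - b (\<sigma> j)" if "\<sigma> \<in> ?P" for \<sigma>
  proof -
    have "(\<Sum>k'\<in>A. b (\<sigma> k')) = 0"
      using sum.permute[of \<sigma> A b] that sum_zero by (simp add: comp_def)
    then show ?thesis
      using assms by (simp add: sum_diff1)
  qed
  have "real (card ?K) * ?T = (\<Sum>k'\<in>?K. \<Sum>\<sigma>\<in>?P. b (\<sigma> j) * b (\<sigma> k'))"
    using T_eq by simp
  also have "\<dots> = (\<Sum>\<sigma>\<in>?P. b (\<sigma> j) * (\<Sum>k'\<in>?K. b (\<sigma> k')))"
    by (subst sum.swap) (simp add: sum_distrib_left)
  also have "\<dots> = (\<Sum>\<sigma>\<in>?P. - (b (\<sigma> j))\<^sup>2)"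
    using rest by (intro sum.cong) (auto simp: power2_eq_square)
  also have "\<dots> \<le> 0"
    by (intro sum_nonpos) simp
  finally have "real (card ?K) * ?T \<le> 0" .
  moreover have "card ?K > 0"
    using assms card_gt_0_iff by (metis DiffI empty_iff finite_Diff singletonD)
  ultimately show ?thesis
    by (simp add: mult_le_0_iff)
qed

lemma sum_permutations_square_sum_le:
  fixes b :: "'a \<Rightarrow> real" and G :: real
  assumes "finite A" "J \<subseteq> A" and sum_zero: "(\<Sum>i\<in>A. b i) = 0"
    and bounded: "\<forall>i\<in>A. \<bar>b i\<bar> \<le> G"
  shows "(\<Sum>\<sigma>\<in>{\<sigma>. \<sigma> permutes A}. (\<Sum>i\<in>J. b (\<sigma> i))\<^sup>2)
     \<le> real (card {\<sigma>. \<sigma> permutes A}) * real (card J) * G\<^sup>2"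
proof -
  let ?P = "{\<sigma>. \<sigma> permutes A}"
  have "finite J"
    using assms finite_subset by blast
  have row: "(\<Sum>k\<in>J. \<Sum>\<sigma>\<in>?P. b (\<sigma> i) * b (\<sigma> k)) \<le> real (card ?P) * G\<^sup>2" if i: "i \<in> J" for i
  proof -
    have diagonal: "(\<Sum>\<sigma>\<in>?P. b (\<sigma> i) * b (\<sigma> i)) \<le> (\<Sum>\<sigma>\<in>?P. G\<^sup>2)"
    proof (rule sum_mono)
      fix \<sigma> assume "\<sigma> \<in> ?P"
      then have "\<bar>b (\<sigma> i)\<bar> \<le> G"
        using bounded i \<open>J \<subseteq> A\<close> permutes_in_image by fastforce
      then show "b (\<sigma> i) * b (\<sigma> i) \<le> G\<^sup>2"
        by (metis abs_ge_zero abs_mult_self_eq order_trans power2_eq_square power_mono)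
    qed
    have off_diagonal: "(\<Sum>k\<in>J-{i}. \<Sum>\<sigma>\<in>?P. b (\<sigma> i) * b (\<sigma> k)) \<le> 0"
      using assms i by (intro sum_nonpos sum_permutations_product_nonpos) auto
    show ?thesis
      using sum.remove[OF \<open>finite J\<close> i, of "\<lambda>k. \<Sum>\<sigma>\<in>?P. b (\<sigma> i) * b (\<sigma> k)"]
        diagonal off_diagonal by simp
  qed
  have "(\<Sum>\<sigma>\<in>?P. (\<Sum>i\<in>J. b (\<sigma> i))\<^sup>2) = (\<Sum>i\<in>J. \<Sum>k\<in>J. \<Sum>\<sigma>\<in>?P. b (\<sigma> i) * b (\<sigma> k))"
    by (simp add: power2_eq_square sum_product sum.swap[of _ ?P] sum.swap[of _ ?P J])
  also have "\<dots> \<le> (\<Sum>i\<in>J. real (card ?P) * G\<^sup>2)"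
    by (rule sum_mono) (rule row)
  finally show ?thesis
    by (simp add: mult_ac)
qed

lemma sum_permutations_suffix_sums_le:
  fixes b :: "nat \<Rightarrow> real" and G :: real
  assumes "(\<Sum>i=1..n. b i) = 0" and "\<forall>i\<in>{1..n}. \<bar>b i\<bar> \<le> G"
  shows "(\<Sum>\<sigma>\<in>{\<sigma>. \<sigma> permutes {1..n}}. \<Sum>i=1..n. (\<Sum>j=i..n. b (\<sigma> j))\<^sup>2)
     \<le> real (card {\<sigma>. \<sigma> permutes {1..n}}) * (real n)\<^sup>2 * G\<^sup>2"
proof -
  let ?N = "real (card {\<sigma>. \<sigma> permutes {1..n}})"
  have "(\<Sum>\<sigma>\<in>{\<sigma>. \<sigma> permutes {1..n}}. \<Sum>i=1..n. (\<Sum>j=i..n. b (\<sigma> j))\<^sup>2)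
      = (\<Sum>i=1..n. \<Sum>\<sigma>\<in>{\<sigma>. \<sigma> permutes {1..n}}. (\<Sum>j=i..n. b (\<sigma> j))\<^sup>2)"
    by (rule sum.swap)
  also have "\<dots> \<le> (\<Sum>i=1..n. ?N * n * G\<^sup>2)"
  proof (rule sum_mono)
    fix i assume "i \<in> {1..n}"
    have "(\<Sum>\<sigma>\<in>{\<sigma>. \<sigma> permutes {1..n}}. (\<Sum>j=i..n. b (\<sigma> j))\<^sup>2) \<le> ?N * card {i..n} * G\<^sup>2"
      using assms \<open>i \<in> {1..n}\<close> by (intro sum_permutations_square_sum_le) auto
    also have "\<dots> \<le> ?N * n * G\<^sup>2"
      using \<open>i \<in> {1..n}\<close> by (intro mult_right_mono mult_left_mono) auto
    finally show "(\<Sum>\<sigma>\<in>{\<sigma>. \<sigma> permutes {1..n}}. (\<Sum>j=i..n. b (\<sigma> j))\<^sup>2) \<le> ?N * n * G\<^sup>2" .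
  qed
  finally show ?thesis
    by (simp add: power2_eq_square mult_ac)
qed

lemma one_le_5_ln_double:
  assumes "n \<ge> 1"
  shows "1 \<le> 5 * ln (2 * real n)"
proof -
  have "ln (1/2::real) \<le> 1/2 - 1"
    by (rule ln_le_minus_one) simp
  then have "1/2 \<le> ln (2::real)"
    by (simp add: ln_div)
  also have "\<dots> \<le> ln (2 * real n)"
    using assms by simp
  finally show ?thesis by simp
qed

theorem lemma7:
  fixes n :: nat and L G \<eta> :: real and a b :: "nat \<Rightarrow> real"
  assumes "n \<ge> 1" and "L > 0" and "G > 0" and "\<eta> > 0" and "\<eta> * L \<le> 1"
    and "\<forall>i\<in>{1..n}. 0 \<le> a i \<and> a i \<le> L"
    and "\<forall>i\<in>{1..n}. -G \<le> b i \<and> b i \<le> G"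
    and "(\<Sum>i = 1..n. b i) = 0"
  shows "perm_expect n (\<lambda>\<sigma>. (X_perm n \<eta> a b \<sigma>)^2)
           \<le> 5 * \<eta>^2 * real n ^ 3 * L^2 * G^2 * ln (2 * real n)"
proof -
  let ?P = "{\<sigma>. \<sigma> permutes {1..n}}"
  let ?S = "\<lambda>\<sigma> i. \<Sum>j=i..n. b (\<sigma> j)"
  have "(\<Sum>\<sigma>\<in>?P. (X_perm n \<eta> a b \<sigma>)\<^sup>2) \<le> (\<eta> * L)\<^sup>2 * n * (\<Sum>\<sigma>\<in>?P. \<Sum>i=1..n. (?S \<sigma> i)\<^sup>2)"
    unfolding sum_distrib_left[of _ _ ?P] using assms(4-6,8)
    by (intro sum_mono X_perm_squared_le) auto
  also have "\<dots> \<le> (\<eta> * L)\<^sup>2 * n * (real (card ?P) * (real n)\<^sup>2 * G\<^sup>2)"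
    using assms(7,8) by (intro mult_left_mono sum_permutations_suffix_sums_le) auto
  finally have "perm_expect n (\<lambda>\<sigma>. (X_perm n \<eta> a b \<sigma>)\<^sup>2) \<le> (\<eta> * L)\<^sup>2 * n ^ 3 * G\<^sup>2"
    using card_permutations[of "{1..n}" n]
    by (simp add: perm_expect_def divide_le_eq power2_eq_square power3_eq_cube mult_ac)
  also have "\<dots> \<le> (\<eta> * L)\<^sup>2 * n ^ 3 * G\<^sup>2 * (5 * ln (2 * real n))"
    using mult_left_mono[OF one_le_5_ln_double[OF assms(1)], of "(\<eta> * L)\<^sup>2 * n ^ 3 * G\<^sup>2"]
    by simp
  finally show ?thesis
    by (simp add: power_mult_distrib mult_ac)
qed

end
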